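(* Let $f:\mathbb R\to\mathbb C$ be defined by $f(t)=\sum_{m=1}^{\infty}\frac{1}{m!}e^{i2^{-m}t}$. Then $f$ is smooth, its Taylor series at $0$ has infinite radius of convergence and converges to $f(t)$ for every $t\in\mathbb R$, and for every $t\in\mathbb R$ the series $\hat f(t)$ converges with $\hat f(t)=f(0)=e-1$.
   Context: For a smooth (possibly complex-valued) function $f$ and a point $t$, $\hat f(t)$ denotes the series $\hat f(t):=\sum_{n=0}^{\infty}\frac{(-1)^n}{n!}\,t^n f^{(n)}(t)$ and also its sum when it converges. *)

theory Defs
  imports "HOL-Analysis.Analysis"
begin

text \<open>The function f(t) = sum_{m>=1} (1/m!) exp(i 2^(-m) t); the summation index
  is shifted (m := Suc m) so that the sum runs over m = 1, 2, ...\<close>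
definition fex :: "real \<Rightarrow> complex" where
  "fex t = (\<Sum>m. exp (\<i> * complex_of_real (t / 2 ^ Suc m)) / fact (Suc m))"

fun nth_vderiv :: "nat \<Rightarrow> (real \<Rightarrow> 'a::real_normed_vector) \<Rightarrow> real \<Rightarrow> 'a" where
  "nth_vderiv 0 g = g"
| "nth_vderiv (Suc n) g = (\<lambda>t. vector_derivative (nth_vderiv n g) (at t))"

definition smooth_real :: "(real \<Rightarrow> 'a::real_normed_vector) \<Rightarrow> bool" where
  "smooth_real g \<longleftrightarrow> (\<forall>n t. nth_vderiv n g differentiable (at t))"

end

theory Submission
  imports Defs
begin

text \<open>
  The function fex is a member of the family of exponential sums
  F(z) = \<Sum>m a_m exp(\<lambda>_m z) with \<Sum>m |a_m| < \<infinity> and |\<lambda>_m| \<le> 1 (here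
  a_m = 1/(m+1)! and \<lambda>_m = i/2^(m+1)). For such sums the series can be
  differentiated termwise, so F^(n)(z) = D n z := \<Sum>m a_m \<lambda>_m^n exp(\<lambda>_m z).
  The central identity is the Taylor expansion around an arbitrary point w,
    \<Sum>n D n w z^n/n! = F(w + z),
  which follows by exchanging the order of summation in an absolutely
  convergent double series. With w = 0 it gives the Taylor series at 0
  (hence infinite radius of convergence); with w = t and z = -t it gives
  hat F(t) = \<Sum>n (-t)^n/n! F^(n)(t) = F(0) = \<Sum>m a_m, which for fex is e - 1.
\<close>

lemma summable_has_sum_nat:
  fixes f :: "nat \<Rightarrow> 'a::banach"
  assumes "summable (\<lambda>n. norm (f n))"
  shows "(f has_sum (\<Sum>n. f n)) UNIV"
  by (rule norm_summable_imp_has_sum[OF assms summable_sums[OF summable_norm_cancel[OF assms]]])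

text \<open>Via unordered sums over nat \<times> nat, which are
  insensitive to the order of summation (the class uniform_topological_group_add,
  held by every concrete normed type, is what the library's Fubini lemma needs).\<close>
lemma double_series_swap:
  fixes F :: "nat \<Rightarrow> nat \<Rightarrow> 'a::{banach, uniform_topological_group_add}"
  assumes bound: "\<And>n m. norm (F n m) \<le> u n * v m"
    and u: "summable u" "\<And>n. u n \<ge> 0"
    and v: "summable v" "\<And>m. v m \<ge> 0"
  shows "(\<lambda>n. \<Sum>m. F n m) sums (\<Sum>m. \<Sum>n. F n m)"
proof -
  define P where "P = (\<lambda>(n, m). u n * v m)"
  have row_sums: "(\<lambda>n. u n * suminf v) summable_on UNIV"
    using sums_nonneg_imp_has_sum[OF summable_sums[OF u(1)]] u(2)
    by (intro summable_on_cmult_left) (auto simp: summable_on_def)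
  have "P summable_on UNIV \<times> UNIV"
  proof (rule summable_on_SigmaI[OF _ row_sums])
    show "((\<lambda>m. P (n, m)) has_sum u n * suminf v) UNIV" for n
      unfolding P_def using has_sum_cmult_right[OF sums_nonneg_imp_has_sum[OF summable_sums[OF v(1)] v(2)]]
      by simp
  qed (use u v in \<open>auto simp: P_def\<close>)
  then have "(\<lambda>p. norm (case_prod F p)) summable_on UNIV \<times> UNIV"
  proof (rule Infinite_Sum.abs_summable_on_comparison_test')
    show "norm (case_prod F p) \<le> P p" for p
      using bound by (auto simp: P_def split: prod.splits)
  qed
  then have F_sum: "(case_prod F has_sum infsum (case_prod F) (UNIV \<times> UNIV)) (UNIV \<times> UNIV)"
    by (rule has_sum_infsum[OF abs_summable_summable])
  have row: "summable (\<lambda>m. norm (F n m))" for n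
    by (rule summable_comparison_test'[OF summable_mult[OF v(1), of "u n"]]) (use bound in auto)
  have col: "summable (\<lambda>n. norm (F n m))" for m
    by (rule summable_comparison_test'[OF summable_mult2[OF u(1), of "v m"]]) (use bound in auto)
  have "((\<lambda>n. \<Sum>m. F n m) has_sum infsum (case_prod F) (UNIV \<times> UNIV)) UNIV"
    by (rule has_sum_Sigma'[OF F_sum]) (use summable_has_sum_nat[OF row] in simp)
  moreover have "((\<lambda>m. \<Sum>n. F n m) has_sum infsum (case_prod F) (UNIV \<times> UNIV)) UNIV"
    by (rule has_sum_Sigma'[OF has_sum_swap[THEN iffD1, OF F_sum]])
       (use summable_has_sum_nat[OF col] in simp)
  ultimately show ?thesis
    by (metis has_sum_imp_sums sums_unique)
qed

locale exp_sum =
  fixes a lam :: "nat \<Rightarrow> complex"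
  assumes summable_a: "summable (\<lambda>m. norm (a m))"
    and norm_lam: "\<And>m. norm (lam m) \<le> 1"
begin

definition D :: "nat \<Rightarrow> complex \<Rightarrow> complex" where
  "D n z = (\<Sum>m. a m * lam m ^ n * exp (lam m * z))"

lemma norm_lam_mult: "norm (lam m * z) \<le> norm z"
  using norm_lam[of m] by (simp add: norm_mult mult_left_le_one_le)

lemma norm_term_le: "norm (a m * lam m ^ n * exp (lam m * z)) \<le> norm (a m) * exp (norm z)"
proof -
  have "norm (a m * lam m ^ n * exp (lam m * z)) = norm (a m) * norm (lam m) ^ n * norm (exp (lam m * z))"
    by (simp add: norm_mult norm_power)
  also have "\<dots> \<le> norm (a m) * 1 * exp (norm z)"
    using norm_exp[of "lam m * z"] norm_lam_mult[of m z]
    by (intro mult_mono power_le_one norm_lam) auto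
  finally show ?thesis by simp
qed

lemma summable_terms: "summable (\<lambda>m. norm (a m * lam m ^ n * exp (lam m * z)))"
  by (rule summable_comparison_test'[OF summable_mult2[OF summable_a]]) (use norm_term_le in simp)

text \<open>Termwise differentiation, justified by locally uniform convergence of the
  differentiated series (Weierstrass M-test on a ball around z).\<close>
lemma D_has_field_derivative: "(D n has_field_derivative D (Suc n) z) (at z)"
proof -
  define S where "S = ball (0::complex) (norm z + 1)"
  define f where "f = (\<lambda>n m z. a m * lam m ^ n * exp (lam m * z))"
  have "(f n m has_field_derivative f (Suc n) m y) (at y within S)" for m y
    unfolding f_def by (auto intro!: derivative_eq_intros)
  moreover have "uniformly_convergent_on S (\<lambda>k y. \<Sum>m<k. f (Suc n) m y)"
  proof (rule Weierstrass_m_test'[OF _ summable_mult2[OF summable_a, of "exp (norm z + 1)"]])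
    fix m y assume "y \<in> S"
    then have "norm (a m) * exp (norm y) \<le> norm (a m) * exp (norm z + 1)"
      by (intro mult_left_mono) (auto simp: S_def)
    then show "norm (f (Suc n) m y) \<le> norm (a m) * exp (norm z + 1)"
      using norm_term_le[of m "Suc n" y] unfolding f_def by linarith
  qed
  moreover have "summable (\<lambda>m. f n m 0)"
    using summable_norm_cancel[OF summable_terms[of n 0]] by (simp add: f_def)
  ultimately have "((\<lambda>z. \<Sum>m. f n m z) has_field_derivative (\<Sum>m. f (Suc n) m z)) (at z)"
    by (intro has_field_derivative_series'(2)[of S]) (auto simp: S_def add_nonneg_pos)
  then show ?thesis by (simp only: D_def[abs_def] f_def)
qed

text \<open>Taylor expansion around an arbitrary point w: expand each exp(\<lambda>_m z) as a
  power series and exchange the two summations.\<close>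
lemma D_expansion: "(\<lambda>n. D n w * z ^ n / fact n) sums D 0 (w + z)"
proof -
  define F where "F = (\<lambda>n m. a m * lam m ^ n * exp (lam m * w) * (z ^ n / fact n))"
  have "(\<lambda>n. \<Sum>m. F n m) sums (\<Sum>m. \<Sum>n. F n m)"
  proof (rule double_series_swap)
    fix n m
    have "norm (F n m) = norm (a m * lam m ^ n * exp (lam m * w)) * (norm z ^ n / fact n)"
      by (simp add: F_def norm_mult norm_divide norm_power)
    also have "\<dots> \<le> norm (a m) * exp (norm w) * (norm z ^ n / fact n)"
      by (rule mult_right_mono[OF norm_term_le]) simp
    finally show "norm (F n m) \<le> norm z ^ n / fact n * (norm (a m) * exp (norm w))"
      by (simp only: mult.commute)
    show "summable (\<lambda>n. norm z ^ n / fact n)"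
      using summable_exp[of "norm z"] by (simp add: divide_inverse mult.commute)
  qed (auto intro: summable_mult2 summable_a)
  moreover have "(\<Sum>m. F n m) = D n w * z ^ n / fact n" for n
  proof -
    have "(\<Sum>m. F n m) = D n w * (z ^ n / fact n)"
      unfolding F_def D_def by (rule suminf_mult2[symmetric, OF summable_norm_cancel[OF summable_terms]])
    then show ?thesis by simp
  qed
  moreover have "(\<lambda>n. F n m) sums (a m * exp (lam m * (w + z)))" for m
  proof -
    have "(\<lambda>n. (lam m * z) ^ n / fact n) sums exp (lam m * z)"
      using exp_converges[of "lam m * z"] by (simp add: scaleR_conv_of_real divide_inverse mult.commute)
    then have "(\<lambda>n. a m * exp (lam m * w) * ((lam m * z) ^ n / fact n)) sums
               (a m * exp (lam m * w) * exp (lam m * z))"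
      by (rule sums_mult)
    then show ?thesis
      by (simp add: F_def power_mult_distrib distrib_left exp_add mult_ac)
  qed
  ultimately show ?thesis
    by (simp add: D_def sums_iff)
qed

end

lemma nth_vderiv_of_real:
  assumes deriv: "\<And>n z. (g n has_field_derivative g (Suc n) z) (at z)"
  shows "nth_vderiv n (\<lambda>t. g 0 (complex_of_real t)) = (\<lambda>t. g n (complex_of_real t))"
proof (induction n)
  case (Suc n)
  have "vector_derivative (\<lambda>t. g n (complex_of_real t)) (at t) = g (Suc n) (complex_of_real t)" for t
    by (intro vector_derivative_at has_vector_derivative_real_field deriv)
  then show ?case by (simp add: Suc)
qed simp

lemma smooth_real_of_real:
  assumes deriv: "\<And>n z. (g n has_field_derivative g (Suc n) z) (at z)"
  shows "smooth_real (\<lambda>t. g 0 (complex_of_real t))"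
  unfolding smooth_real_def nth_vderiv_of_real[where g = g, OF deriv]
  by (blast intro: differentiableI_vector has_vector_derivative_real_field deriv)

definition fex_coeff :: "nat \<Rightarrow> complex" where
  "fex_coeff m = 1 / fact (Suc m)"

definition fex_freq :: "nat \<Rightarrow> complex" where
  "fex_freq m = \<i> / 2 ^ Suc m"

lemma fex_coeff_sums: "fex_coeff sums (exp 1 - 1)"
proof -
  have "(\<lambda>n. 1 / fact n :: complex) sums exp 1"
    using exp_converges[of "1::complex"] by (simp add: divide_inverse scaleR_conv_of_real)
  then show ?thesis
    unfolding fex_coeff_def by (subst sums_Suc_iff) simp
qed

interpretation fex_sum: exp_sum fex_coeff fex_freq
proof
  have "summable (\<lambda>n. 1 / fact n :: real)"
    using summable_exp[of "1::real"] by (simp add: divide_inverse)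
  then show "summable (\<lambda>m. norm (fex_coeff m))"
    unfolding fex_coeff_def norm_divide by (subst summable_Suc_iff) simp
  show "norm (fex_freq m) \<le> 1" for m
    using one_le_power[of "2::real" "Suc m"] by (simp add: fex_freq_def norm_divide norm_power)
qed

lemma fex_eq_D: "fex = (\<lambda>t. fex_sum.D 0 (complex_of_real t))"
  by (auto simp: fex_def fex_sum.D_def fex_coeff_def fex_freq_def
      intro!: ext suminf_cong arg_cong[where f = exp])

lemma fex_sum_D_0_0: "fex_sum.D 0 0 = exp 1 - 1"
  using fex_coeff_sums by (simp add: fex_sum.D_def sums_iff)

lemma nth_vderiv_fex: "nth_vderiv n fex = (\<lambda>t. fex_sum.D n (complex_of_real t))"
  unfolding fex_eq_D by (rule nth_vderiv_of_real[where g = fex_sum.D, OF fex_sum.D_has_field_derivative])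

theorem mainTheorem17:
  shows "smooth_real fex
    \<and> conv_radius (\<lambda>n. nth_vderiv n fex 0 / fact n) = \<infinity>
    \<and> (\<forall>t::real. (\<lambda>n. nth_vderiv n fex 0 / fact n * complex_of_real t ^ n) sums fex t)
    \<and> (\<forall>t::real. (\<lambda>n. (-1) ^ n / fact n * complex_of_real t ^ n * nth_vderiv n fex t) sums fex 0)
    \<and> fex 0 = exp 1 - 1"
proof -
  have taylor: "(\<lambda>n. fex_sum.D n 0 / fact n * z ^ n) sums fex_sum.D 0 z" for z
    using fex_sum.D_expansion[of 0 z] by simp
  have hat: "(\<lambda>n. (-1) ^ n / fact n * z ^ n * fex_sum.D n z) sums fex_sum.D 0 0" for z
    using fex_sum.D_expansion[of z "- z"] by (simp add: power_minus[of z] mult.commute)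
  show ?thesis
    unfolding nth_vderiv_fex
  proof (intro conjI allI)
    show "smooth_real fex"
      unfolding fex_eq_D by (rule smooth_real_of_real[where g = fex_sum.D, OF fex_sum.D_has_field_derivative])
    show "conv_radius (\<lambda>n. fex_sum.D n (complex_of_real 0) / fact n) = \<infinity>"
      by (rule conv_radius_inftyI'') (use taylor in \<open>auto simp: sums_iff\<close>)
    show "(\<lambda>n. fex_sum.D n (complex_of_real 0) / fact n * complex_of_real t ^ n) sums fex t" for t
      using taylor[of "complex_of_real t"] by (simp add: fex_eq_D)
    show "(\<lambda>n. (-1) ^ n / fact n * complex_of_real t ^ n * fex_sum.D n (complex_of_real t)) sums fex 0"
      for t
      using hat[of "complex_of_real t"] by (simp add: fex_eq_D)
    show "fex 0 = exp 1 - 1"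
      by (simp add: fex_eq_D fex_sum_D_0_0)
  qed
qed

end
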